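(* Let $P$ be a pre-meadow with $\mathbf{a}$. The following are equivalent: (1) for all $0\cdot z,0\cdot w\in 0\cdot P$ with $0\cdot z\le 0\cdot w$, the transition map $f_{0\cdot w,0\cdot z}:P_{0\cdot w}\to P_{0\cdot z}$ is surjective; (2) for all $0\cdot z\in 0\cdot P$, the transition map $f_{0,0\cdot z}:P_0\to P_{0\cdot z}$ is surjective.
   Context: A pre-meadow is a structure $(P,+,-,\cdot,0,1)$ satisfying: $(x+y)+z=x+(y+z)$, $x+y=y+x$, $x+0=x$, $x+(-x)=0\cdot x$, $(xy)z=x(yz)$, $xy=yx$, $1\cdot x=x$, $x(y+z)=xy+xz$, $-(-x)=x$, $0\cdot(x+y)=0\cdot x\cdot y$. For $z\in 0\cdot P$ put $P_z:=\{x\in P\mid 0\cdot x=z\}$. $P$ is a pre-meadow with $\mathbf{a}$ if there is a unique $z\in 0\cdot P$ with $|P_z|=1$, denoted $\mathbf{a}$, and $x+\mathbf{a}=\mathbf{a}$ for all $x\in P$. Each $P_{0\cdot z}$ is a commutative ring with the induced operations. The set $0\cdot P$ is ordered by $0\cdot z\le 0\cdot w$ iff $0\cdot z\cdot w=0\cdot z$. For $0\cdot z\le 0\cdot w$ the transition map $f_{0\cdot w,0\cdot z}:P_{0\cdot w}\to P_{0\cdot z}$ is the ring homomorphism $x\mapsto x+0\cdot z$. *)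

theory Defs
  imports Main
begin

definition pre_meadow ::
  "('a \<Rightarrow> 'a \<Rightarrow> 'a) \<Rightarrow> ('a \<Rightarrow> 'a) \<Rightarrow> ('a \<Rightarrow> 'a \<Rightarrow> 'a) \<Rightarrow> 'a \<Rightarrow> 'a \<Rightarrow> bool" where
  "pre_meadow add neg mul zero one \<longleftrightarrow>
     (\<forall>x y z. add (add x y) z = add x (add y z)) \<and>
     (\<forall>x y. add x y = add y x) \<and>
     (\<forall>x. add x zero = x) \<and>
     (\<forall>x. add x (neg x) = mul zero x) \<and>
     (\<forall>x y z. mul (mul x y) z = mul x (mul y z)) \<and>
     (\<forall>x y. mul x y = mul y x) \<and>
     (\<forall>x. mul one x = x) \<and>
     (\<forall>x y z. mul x (add y z) = add (mul x y) (mul x z)) \<and>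
     (\<forall>x. neg (neg x) = x) \<and>
     (\<forall>x y. mul zero (add x y) = mul (mul zero x) y)"

definition zeroP :: "('a \<Rightarrow> 'a \<Rightarrow> 'a) \<Rightarrow> 'a \<Rightarrow> 'a set" where
  "zeroP mul zero = range (mul zero)"

definition fibre :: "('a \<Rightarrow> 'a \<Rightarrow> 'a) \<Rightarrow> 'a \<Rightarrow> 'a \<Rightarrow> 'a set" where
  "fibre mul zero z = {x. mul zero x = z}"

definition pre_meadow_with_a ::
  "('a \<Rightarrow> 'a \<Rightarrow> 'a) \<Rightarrow> ('a \<Rightarrow> 'a) \<Rightarrow> ('a \<Rightarrow> 'a \<Rightarrow> 'a) \<Rightarrow> 'a \<Rightarrow> 'a \<Rightarrow> bool" where
  "pre_meadow_with_a add neg mul zero one \<longleftrightarrow>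
     pre_meadow add neg mul zero one \<and>
     (\<exists>!z. z \<in> zeroP mul zero \<and> card (fibre mul zero z) = 1) \<and>
     (\<forall>x. add x (THE z. z \<in> zeroP mul zero \<and> card (fibre mul zero z) = 1)
            = (THE z. z \<in> zeroP mul zero \<and> card (fibre mul zero z) = 1))"

text \<open>Order on 0\<cdot>P: zle mul zero z w means 0\<cdot>z \<le> 0\<cdot>w, i.e. 0\<cdot>z\<cdot>w = 0\<cdot>z.\<close>

definition zle :: "('a \<Rightarrow> 'a \<Rightarrow> 'a) \<Rightarrow> 'a \<Rightarrow> 'a \<Rightarrow> 'a \<Rightarrow> bool" where
  "zle mul zero z w \<longleftrightarrow> mul (mul zero z) w = mul zero z"

definition transition :: "('a \<Rightarrow> 'a \<Rightarrow> 'a) \<Rightarrow> 'a \<Rightarrow> 'a \<Rightarrow> 'a" where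
  "transition add u x = add x u"

definition transition_surj ::
  "('a \<Rightarrow> 'a \<Rightarrow> 'a) \<Rightarrow> ('a \<Rightarrow> 'a \<Rightarrow> 'a) \<Rightarrow> 'a \<Rightarrow> 'a \<Rightarrow> 'a \<Rightarrow> bool" where
  "transition_surj add mul zero v u \<longleftrightarrow>
     transition add u ` fibre mul zero v = fibre mul zero u"

end

theory Submission
  imports Defs
begin

text \<open>If \<open>0\<cdot>z \<le> 0\<cdot>w\<close> then \<open>0\<cdot>w + 0\<cdot>z = 0\<cdot>z\<close>, so the transition maps compose:
  \<open>f(0, 0\<cdot>z) = f(0\<cdot>w, 0\<cdot>z) \<circ> f(0, 0\<cdot>w)\<close>, and surjectivity of the left-hand side forces
  surjectivity of \<open>f(0\<cdot>w, 0\<cdot>z)\<close>. Conversely \<open>f(0, 0\<cdot>z)\<close> is the case \<open>w = 1\<close>, since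
  \<open>0\<cdot>1 = 0\<close> is the top of \<open>0\<cdot>P\<close>.\<close>

locale pre_meadow_laws =
  fixes add :: "'a \<Rightarrow> 'a \<Rightarrow> 'a" and neg :: "'a \<Rightarrow> 'a"
    and mul :: "'a \<Rightarrow> 'a \<Rightarrow> 'a" and zero one :: 'a
  assumes pre_meadow: "pre_meadow add neg mul zero one"
begin

lemma mul_assoc: "mul (mul x y) z = mul x (mul y z)"
  and mul_commute: "mul x y = mul y x"
  and mul_one_left: "mul one x = x"
  and distrib: "mul x (add y z) = add (mul x y) (mul x z)"
  and zero_mul_add: "mul zero (add x y) = mul (mul zero x) y"
  and add_assoc: "add (add x y) z = add x (add y z)"
  and add_commute: "add x y = add y x"
  and add_zero_right: "add x zero = x"
  using pre_meadow unfolding pre_meadow_def by blast+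

lemma mul_zero_one: "mul zero one = zero"
  by (simp add: mul_commute[of zero] mul_one_left)

lemma zle_one: "zle mul zero z one"
  unfolding zle_def by (simp add: mul_commute[of _ one] mul_one_left)

lemma zero_mul_zero_mul: "mul zero (mul zero x) = mul zero x"
proof -
  have "mul zero zero = zero"
    using zero_mul_add[of one zero] by (simp add: add_zero_right mul_zero_one)
  then show ?thesis
    by (simp flip: mul_assoc)
qed

lemma zle_add_absorb:
  assumes "zle mul zero z w"
  shows "add (mul zero z) (mul zero w) = mul zero z"
proof -
  have "add (mul zero z) (mul zero w) = mul zero (add z w)"
    by (simp add: distrib)
  also have "\<dots> = mul zero z"
    using assms by (simp add: zero_mul_add zle_def)
  finally show ?thesis .
qed

lemma zle_mul_absorb:
  assumes "zle mul zero z w"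
  shows "mul (mul zero w) (mul zero z) = mul zero z"
proof -
  have "mul (mul zero w) (mul zero z) = mul zero (mul (mul zero z) w)"
    by (metis mul_assoc mul_commute)
  also have "\<dots> = mul zero z"
    using assms by (simp add: zle_def zero_mul_zero_mul)
  finally show ?thesis .
qed

lemma transition_comp:
  assumes "zle mul zero z w"
  shows "transition add (mul zero z) (transition add (mul zero w) x) = transition add (mul zero z) x"
  using zle_add_absorb[OF assms]
  by (simp add: transition_def add_assoc add_commute[of "mul zero w"])

lemma transition_image_fibre:
  assumes "zle mul zero z w"
  shows "transition add (mul zero z) ` fibre mul zero (mul zero w) \<subseteq> fibre mul zero (mul zero z)"
  using zle_mul_absorb[OF assms] by (auto simp: fibre_def transition_def zero_mul_add)

lemma transition_surj_from_zero:
  assumes le: "zle mul zero z w"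
    and surj: "transition_surj add mul zero zero (mul zero z)"
  shows "transition_surj add mul zero (mul zero w) (mul zero z)"
proof -
  have "fibre mul zero (mul zero z)
      = transition add (mul zero z) ` transition add (mul zero w) ` fibre mul zero zero"
    using surj transition_comp[OF le] unfolding transition_surj_def image_image by simp
  also have "\<dots> \<subseteq> transition add (mul zero z) ` fibre mul zero (mul zero w)"
    using transition_image_fibre[OF zle_one, of w] by (intro image_mono) (simp add: mul_zero_one)
  finally show ?thesis
    using transition_image_fibre[OF le] unfolding transition_surj_def by blast
qed

end

theorem proposition3p6:
  fixes add :: "'a \<Rightarrow> 'a \<Rightarrow> 'a" and neg :: "'a \<Rightarrow> 'a"
    and mul :: "'a \<Rightarrow> 'a \<Rightarrow> 'a" and zero one :: 'a
  assumes "pre_meadow_with_a add neg mul zero one"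
  shows "(\<forall>z w. zle mul zero z w \<longrightarrow>
            transition_surj add mul zero (mul zero w) (mul zero z))
         \<longleftrightarrow> (\<forall>z. transition_surj add mul zero zero (mul zero z))"
proof -
  interpret pre_meadow_laws add neg mul zero one
    using assms by unfold_locales (simp add: pre_meadow_with_a_def)
  show ?thesis
    using zle_one mul_zero_one transition_surj_from_zero by metis
qed

end
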